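(* Let $s\ge 4$ be a perfect square and $E=\mathbb{R}^{s\times s\times s}$. Let $C_1,\dots,C_5\subset E$ be the Sudoku constraint sets defined in the context, and assume $C_1\cap\dots\cap C_5\neq\emptyset$. Let $z_{1,0},\dots,z_{5,0}\in E$ and consider the product-space Douglas--Rachford iteration \[ x_{k+1}=\tfrac15\sum_{i=1}^5 z_{i,k},\qquad u_{i,k+1}\in P_{C_i}(2x_{k+1}-z_{i,k}),\qquad z_{i,k+1}=z_{i,k}+u_{i,k+1}-x_{k+1}\quad(i=1,\dots,5). \] Write $\mathbf{z}_k=(z_{1,k},\dots,z_{5,k})$, $\mathbf{u}_k=(u_{1,k},\dots,u_{5,k})$. Assume the iteration converges: $\mathbf{z}_k\to\mathbf{z}^\star=(z_1^\star,\dots,z_5^\star)$, $x_k\to x^\star$ and $u_{i,k}\to x^\star$ for each $i$, where $x^\star=\tfrac15\sum_{i=1}^5 z_i^\star$. Suppose moreover that for $i=1,\dots,4$, $C_i$ is prox-regular at $x^\star$ for $x^\star-z_i^\star$ and \[ x^\star-z_i^\star\in\operatorname{int}\big(N_{C_i}(x^\star)\big). \] Then for all $k$ large enough $u_{i,k}=x^\star$ for $i=1,\dots,4$, and $\|\mathbf{z}_k-\mathbf{z}^\star\|=O(\eta^k)$ with $\eta=\frac{\sqrt5}{5}$ (norm on $E^5$ is the Euclidean product norm).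
   Context: Entries of $x\in E$ are $x(i,j,k)$, $i,j,k\in\{1,\dots,s\}$. Let $\mathcal{E}=\{e_1,\dots,e_s\}$ be the standard basis vectors of $\mathbb{R}^s$. $C_1=\{x: x(\cdot,j,k)\in\mathcal{E}\ \forall j,k\}$; $C_2=\{x: x(i,\cdot,k)\in\mathcal{E}\ \forall i,k\}$; $C_3=\{x: x(i,j,\cdot)\in\mathcal{E}\ \forall i,j\}$; $C_4=\{x:$ for every $k$ and every $a,b\in\{1,\dots,\sqrt s\}$, the $\sqrt s\times\sqrt s$ block $\big(x(i,j,k)\big)_{i\in\{\sqrt s(a-1)+1,\dots,\sqrt s a\},\, j\in\{\sqrt s(b-1)+1,\dots,\sqrt s b\}}$, viewed as a vector in $\mathbb{R}^s$, lies in $\mathcal{E}\}$; $C_5=\{x: x(i,j,k)=g(i,j,k)\ \forall (i,j,k)\in\Omega\}$ for a given index set $\Omega$ and given values $g$ (encoding the provided clues). For non-empty $C$, $P_C(x)=\{y\in C:\|x-y\|=\operatorname{dist}(x,C)\}$. $C$ is prox-regular at $x\in C$ for $v$ if $P_C(x+v)=\{x\}$. The proximal normal cone is $N^P_C(x)=\operatorname{cone}(P_C^{-1}(x)-x)$; the limiting normal cone $N_C(x)$ is the set of all limits of $v_k\in N^P_C(x_k)$ with $x_k\in C$, $x_k\to x$. $\operatorname{int}$ denotes interior. *)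

theory Defs
  imports "HOL-Analysis.Analysis" "HOL-Library.Landau_Symbols"
begin

text \<open>The space E = R^(s x s x s) is modelled as real ^ ('a * 'a * 'a) for a finite
index type 'a, together with a bijection ix : 'a -> {1..s} fixing the labelling of
indices (needed for the block constraint C4).\<close>

type_synonym 'a tensor = "real ^ ('a \<times> 'a \<times> 'a)"

definition is_std_basis :: "('b \<Rightarrow> real) \<Rightarrow> 'b set \<Rightarrow> bool" where
  "is_std_basis v I \<longleftrightarrow> (\<exists>p\<in>I. \<forall>q\<in>I. v q = (if q = p then 1 else 0))"

definition C1 :: "'a::finite tensor set" where
  "C1 = {x. \<forall>j k. is_std_basis (\<lambda>i. x $ (i, j, k)) UNIV}"

definition C2 :: "'a::finite tensor set" where
  "C2 = {x. \<forall>i k. is_std_basis (\<lambda>j. x $ (i, j, k)) UNIV}"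

definition C3 :: "'a::finite tensor set" where
  "C3 = {x. \<forall>i j. is_std_basis (\<lambda>k. x $ (i, j, k)) UNIV}"

definition block_idx :: "('a \<Rightarrow> nat) \<Rightarrow> nat \<Rightarrow> nat \<Rightarrow> 'a set" where
  "block_idx ix r a = {i. r * (a - 1) + 1 \<le> ix i \<and> ix i \<le> r * a}"

definition C4 :: "('a::finite \<Rightarrow> nat) \<Rightarrow> nat \<Rightarrow> 'a tensor set" where
  "C4 ix r = {x. \<forall>k. \<forall>a\<in>{1..r}. \<forall>b\<in>{1..r}.
      is_std_basis (\<lambda>(i, j). x $ (i, j, k)) (block_idx ix r a \<times> block_idx ix r b)}"

definition C5 :: "('a \<times> 'a \<times> 'a) set \<Rightarrow> ('a \<times> 'a \<times> 'a \<Rightarrow> real) \<Rightarrow> 'a::finite tensor set" where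
  "C5 \<Omega> g = {x. \<forall>p\<in>\<Omega>. x $ p = g p}"

definition sudoku_C :: "('a::finite \<Rightarrow> nat) \<Rightarrow> nat \<Rightarrow> ('a \<times> 'a \<times> 'a) set
    \<Rightarrow> ('a \<times> 'a \<times> 'a \<Rightarrow> real) \<Rightarrow> nat \<Rightarrow> 'a tensor set" where
  "sudoku_C ix r \<Omega> g i =
     (if i = 1 then C1 else if i = 2 then C2 else if i = 3 then C3
      else if i = 4 then C4 ix r else C5 \<Omega> g)"

definition proj :: "'v::real_normed_vector set \<Rightarrow> 'v \<Rightarrow> 'v set" where
  "proj C x = {y \<in> C. dist x y = infdist x C}"

definition prox_regular_at :: "'v::real_normed_vector set \<Rightarrow> 'v \<Rightarrow> 'v \<Rightarrow> bool" where
  "prox_regular_at C x v \<longleftrightarrow> x \<in> C \<and> proj C (x + v) = {x}"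

definition proximal_normal :: "'v::real_normed_vector set \<Rightarrow> 'v \<Rightarrow> 'v set" where
  "proximal_normal C x = cone hull {w - x | w. x \<in> proj C w}"

definition limiting_normal :: "'v::real_normed_vector set \<Rightarrow> 'v \<Rightarrow> 'v set" where
  "limiting_normal C x = {v. \<exists>xs vs. (\<forall>k. xs k \<in> C \<and> vs k \<in> proximal_normal C (xs k))
       \<and> xs \<longlonglongrightarrow> x \<and> vs \<longlonglongrightarrow> v}"

end

theory Submission
  imports Defs
begin

(*
  The sets C1, ..., C4 consist of 0/1 tensors, so the convergent projections u_i (i \<le> 4) are
  eventually equal to their limit x*.
  From then on each coordinate evolves by an explicit affine recursion in which the errors
  e_i = z_i - z*_i of the four frozen projections are shifted by their mean d. The projection onto
  the clue set C5 keeps clue coordinates (then all five errors are shifted, the mean vanishes after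
  one step and the errors freeze at their limit 0) and copies the reflected point elsewhere (then
  e_5 is reset to d; the four shifted errors differ by constants that must be 0, so they share a
  value a, and with b = e_5 one step maps the squared error 4a\<^sup>2 + b\<^sup>2 to (4a\<^sup>2 + b\<^sup>2)/5).
  Either way the squared error shrinks by exactly the factor 1/5 per step.
*)

lemma power2_norm_vec: "(norm (v :: real ^ 'n))\<^sup>2 = (\<Sum>p\<in>UNIV. (v $ p)\<^sup>2)"
  unfolding power2_norm_eq_inner inner_vec_def by (simp add: power2_eq_square)

lemma power2_dist_vec: "(dist (v :: real ^ 'n) w)\<^sup>2 = (\<Sum>p\<in>UNIV. (v $ p - w $ p)\<^sup>2)"
  by (simp add: dist_norm power2_norm_vec)

lemma eventually_eq_lim_of_finite_range:
  fixes f :: "'b \<Rightarrow> 'a::t1_space"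
  assumes "finite A" and "eventually (\<lambda>k. f k \<in> A) F" and "(f \<longlongrightarrow> L) F"
  shows "eventually (\<lambda>k. f k = L) F"
proof -
  have "open (- (A - {L}))" using assms(1) by (intro open_Compl finite_imp_closed) simp
  then have "eventually (\<lambda>k. f k \<in> - (A - {L})) F"
    using assms(3) topological_tendstoD by fastforce
  with assms(2) show ?thesis by eventually_elim blast
qed

lemma eventually_eq_lim_of_zero_one_vec:
  fixes f :: "'b \<Rightarrow> real ^ 'n"
  assumes "eventually (\<lambda>k. \<forall>q. f k $ q \<in> {0, 1}) F" and "(f \<longlongrightarrow> L) F"
  shows "eventually (\<lambda>k. f k = L) F"
proof -
  have "eventually (\<lambda>k. f k $ q = L $ q) F" for q
  proof (rule eventually_eq_lim_of_finite_range)
    show "eventually (\<lambda>k. f k $ q \<in> {0, 1}) F" using assms(1) by eventually_elim blast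
  qed (use assms(2) in \<open>auto intro: tendsto_vec_nth\<close>)
  then have "eventually (\<lambda>k. \<forall>q. f k $ q = L $ q) F" by (rule eventually_all_finite)
  then show ?thesis by (simp add: vec_eq_iff)
qed

lemma bigo_power_of_eventually_contracting:
  fixes f :: "nat \<Rightarrow> real"
  assumes "\<eta> > 0" and "\<And>k. k \<ge> K \<Longrightarrow> \<bar>f (Suc k)\<bar> \<le> \<eta> * \<bar>f k\<bar>"
  shows "f \<in> O(\<lambda>k. \<eta> ^ k)"
proof -
  have bound: "\<bar>f k\<bar> \<le> \<bar>f K\<bar> * \<eta> ^ (k - K)" if "k \<ge> K" for k
    using that
  proof (induction k rule: dec_induct)
    case (step k)
    have "\<bar>f (Suc k)\<bar> \<le> \<eta> * (\<bar>f K\<bar> * \<eta> ^ (k - K))"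
      using assms step by (meson mult_left_mono less_imp_le order_trans)
    also have "\<dots> = \<bar>f K\<bar> * \<eta> ^ (Suc k - K)" using step(1) by (simp add: Suc_diff_le)
    finally show ?case .
  qed simp
  show ?thesis
  proof (rule bigoI[where c = "\<bar>f K\<bar> / \<eta> ^ K"])
    show "eventually (\<lambda>k. norm (f k) \<le> \<bar>f K\<bar> / \<eta> ^ K * norm (\<eta> ^ k)) sequentially"
      unfolding eventually_sequentially
    proof (intro exI allI impI)
      fix k assume k: "K \<le> k"
      have "\<eta> ^ k = \<eta> ^ K * \<eta> ^ (k - K)" using k by (simp flip: power_add)
      then show "norm (f k) \<le> \<bar>f K\<bar> / \<eta> ^ K * norm (\<eta> ^ k)"
        using bound[OF k] assms(1) by simp
    qed
  qed
qed

lemma sqrt_bigo_power_of_eventually_contracting: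
  fixes f :: "nat \<Rightarrow> real"
  assumes "c > 0" and "\<And>k. k \<ge> K \<Longrightarrow> f (Suc k) = c * f k"
  shows "(\<lambda>k. sqrt (f k)) \<in> O(\<lambda>k. sqrt c ^ k)"
  using assms by (intro bigo_power_of_eventually_contracting[where K = K])
    (simp_all add: real_sqrt_mult abs_mult)

lemma mean_shift_errors_vanish:
  fixes e :: "'i \<Rightarrow> nat \<Rightarrow> real"
  assumes I: "finite I" "I \<noteq> {}"
    and lim: "\<And>i. i \<in> I \<Longrightarrow> (\<lambda>k. e i k) \<longlonglongrightarrow> 0"
    and shift: "\<And>k i. k \<ge> K \<Longrightarrow> i \<in> I \<Longrightarrow>
      e i (Suc k) = e i k - (\<Sum>l\<in>I. e l k) / card I"
    and i: "i \<in> I" and k: "k > K"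
  shows "e i k = 0"
proof -
  have sum_zero: "(\<Sum>l\<in>I. e l (Suc k)) = 0" if "k \<ge> K" for k
    using I by (simp add: shift[OF that] sum_subtractf)
  have const: "e i k = e i (Suc K)" if "k \<ge> Suc K" for k
    using that
  proof (induction k rule: dec_induct)
    case (step k)
    then obtain k' where "k = Suc k'" "k' \<ge> K" by (cases k) auto
    then show ?case using step sum_zero[of k'] shift[of k i] i by simp
  qed simp
  have "(\<lambda>k. e i k) \<longlonglongrightarrow> e i (Suc K)"
    using const by (intro tendsto_eventually eventually_sequentiallyI)
  then have "e i (Suc K) = 0" using lim[OF i] by (rule LIMSEQ_unique)
  with const[of k] k show ?thesis by simp
qed

lemma mean_reset_errors_contract:
  fixes e :: "'i \<Rightarrow> nat \<Rightarrow> real" and I :: "'i set"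
  defines "d k \<equiv> (\<Sum>l\<in>I. e l k) / card I"
  assumes I: "finite I" "j \<in> I"
    and lim: "\<And>i. i \<in> I \<Longrightarrow> (\<lambda>k. e i k) \<longlonglongrightarrow> 0"
    and step: "\<And>k i. k \<ge> K \<Longrightarrow> i \<in> I - {j} \<Longrightarrow> e i (Suc k) = e i k - d k"
    and step_j: "\<And>k. k \<ge> K \<Longrightarrow> e j (Suc k) = d k"
    and k: "k \<ge> K"
  shows "(\<Sum>i\<in>I. (e i (Suc k))\<^sup>2) = (\<Sum>i\<in>I. (e i k)\<^sup>2) / card I"
proof (cases "I - {j} = {}")
  case True
  then have "I = {j}" using I by blast
  then show ?thesis using step_j[OF k] by (simp add: d_def)
next
  case False
  then obtain i0 where i0: "i0 \<in> I - {j}" by blast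
  have equal: "e i k = e i0 k" if i: "i \<in> I - {j}" for i
  proof -
    have invariant: "e i k' - e i0 k' = e i K - e i0 K" if "k' \<ge> K" for k'
      using that by (induction k' rule: dec_induct) (use step[of _ i] step[of _ i0] i i0 in auto)
    have "(\<lambda>k. e i k - e i0 k) \<longlonglongrightarrow> e i K - e i0 K"
      using invariant by (intro tendsto_eventually eventually_sequentiallyI)
    moreover have "(\<lambda>k. e i k - e i0 k) \<longlonglongrightarrow> 0"
      using tendsto_diff[OF lim lim] i i0 by fastforce
    ultimately have "e i K - e i0 K = 0" by (rule LIMSEQ_unique)
    then show ?thesis using invariant[OF k] by simp
  qed
  define n where "n = real (card I)"
  have "card I \<ge> 1" using I by (auto simp: Suc_le_eq card_gt_0_iff)
  then have n: "n \<ge> 1" "real (card (I - {j})) = n - 1"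
    using I by (simp_all add: n_def of_nat_diff)
  have split: "(\<Sum>i\<in>I. f i) = (\<Sum>i\<in>I - {j}. f i) + f j" for f :: "'i \<Rightarrow> real"
    using I by (simp add: sum.remove add.commute)
  have sum_equal: "(\<Sum>i\<in>I - {j}. h (e i k)) = (n - 1) * h (e i0 k)" for h :: "real \<Rightarrow> real"
  proof -
    have "(\<Sum>i\<in>I - {j}. h (e i k)) = (\<Sum>i\<in>I - {j}. h (e i0 k))"
      using equal by (intro sum.cong) simp_all
    then show ?thesis using n(2) by simp
  qed
  define a b where "a = e i0 k" and "b = e j k"
  have d: "d k = ((n - 1) * a + b) / n"
    using sum_equal[of id] by (simp add: d_def split n_def a_def b_def)
  have "(\<Sum>i\<in>I. (e i (Suc k))\<^sup>2) = (\<Sum>i\<in>I - {j}. (e i k - d k)\<^sup>2) + (d k)\<^sup>2"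
    using step[OF k] step_j[OF k] by (simp add: split)
  also have "\<dots> = (n - 1) * (a - d k)\<^sup>2 + (d k)\<^sup>2"
    using sum_equal[of "\<lambda>t. (t - d k)\<^sup>2"] by (simp add: a_def)
  also have "\<dots> = ((n - 1) * a\<^sup>2 + b\<^sup>2) / n"
    using n(1) unfolding d by (simp add: field_simps power2_eq_square)
  also have "\<dots> = (\<Sum>i\<in>I. (e i k)\<^sup>2) / card I"
    using sum_equal[of power2] by (simp add: split n_def a_def b_def)
  finally show ?thesis .
qed

lemma dr_errors_contract:
  fixes z :: "'i \<Rightarrow> nat \<Rightarrow> real ^ 'n" and x :: "nat \<Rightarrow> real ^ 'n" and I :: "'i set"
  assumes I: "finite I" "j \<in> I"
    and x_step: "\<And>k. x (Suc k) = (1 / card I) *\<^sub>R (\<Sum>i\<in>I. z i k)"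
    and xs_def: "xs = (1 / card I) *\<^sub>R (\<Sum>i\<in>I. zs i)"
    and z_lim: "\<And>i. i \<in> I \<Longrightarrow> (\<lambda>k. z i k) \<longlonglongrightarrow> zs i"
    and x_lim: "x \<longlonglongrightarrow> xs"
    and step: "\<And>k i. k \<ge> K \<Longrightarrow> i \<in> I - {j} \<Longrightarrow> z i (Suc k) = z i k + xs - x (Suc k)"
    and step_j: "\<And>p. (\<forall>k\<ge>K. z j (Suc k) $ p = z j k $ p + xs $ p - x (Suc k) $ p)
                    \<or> (\<forall>k\<ge>K. z j (Suc k) $ p = x (Suc k) $ p)"
    and k: "k > K"
  shows "(\<Sum>i\<in>I. (norm (z i (Suc k) - zs i))\<^sup>2) = (\<Sum>i\<in>I. (norm (z i k - zs i))\<^sup>2) / card I"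
proof -
  have component: "(\<Sum>i\<in>I. (z i (Suc k) $ p - zs i $ p)\<^sup>2) = (\<Sum>i\<in>I. (z i k $ p - zs i $ p)\<^sup>2) / card I"
    for p
  proof -
    define e where "e i k = z i k $ p - zs i $ p" for i k
    have mean: "(\<Sum>l\<in>I. e l k) / card I = x (Suc k) $ p - xs $ p" for k
      by (simp add: e_def x_step xs_def sum_subtractf diff_divide_distrib)
    have lim: "(\<lambda>k. e i k) \<longlonglongrightarrow> 0" if "i \<in> I" for i
      unfolding e_def using z_lim[OF that] by (intro LIM_zero tendsto_vec_nth)
    have step_e: "e i (Suc k) = e i k - (\<Sum>l\<in>I. e l k) / card I" if "k \<ge> K" "i \<in> I - {j}" for k i
      unfolding mean by (simp add: e_def step[OF that])
    from step_j[of p] show ?thesis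
    proof
      assume "\<forall>k\<ge>K. z j (Suc k) $ p = z j k $ p + xs $ p - x (Suc k) $ p"
      then have "e i (Suc k) = e i k - (\<Sum>l\<in>I. e l k) / card I" if "k \<ge> K" "i \<in> I" for k i
        using step_e[of k i] that unfolding mean by (cases "i = j") (simp_all add: e_def)
      then have "e i k' = 0" if "i \<in> I" "k' > K" for i k'
        using mean_shift_errors_vanish[of I e K i k'] I lim that by blast
      then show ?thesis using k by (simp add: e_def)
    next
      assume z_j: "\<forall>k\<ge>K. z j (Suc k) $ p = x (Suc k) $ p"
      have "(\<lambda>k. z j (Suc k) $ p) \<longlonglongrightarrow> zs j $ p"
        using LIMSEQ_Suc[OF z_lim[OF I(2)]] by (rule tendsto_vec_nth)
      moreover have "(\<lambda>k. z j (Suc k) $ p) \<longlonglongrightarrow> xs $ p"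
        using z_j LIMSEQ_Suc[OF x_lim]
        by (subst tendsto_cong[where g = "\<lambda>k. x (Suc k) $ p"])
           (auto intro: tendsto_vec_nth eventually_sequentiallyI)
      ultimately have "zs j $ p = xs $ p" by (rule LIMSEQ_unique)
      then have "e j (Suc k) = (\<Sum>l\<in>I. e l k) / card I" if "k \<ge> K" for k
        using z_j that unfolding mean by (simp add: e_def)
      then show ?thesis
        using mean_reset_errors_contract[OF I lim step_e] k unfolding e_def by simp
    qed
  qed
  have by_component: "(\<Sum>i\<in>I. (norm (z i k' - zs i))\<^sup>2) = (\<Sum>p\<in>UNIV. \<Sum>i\<in>I. (z i k' $ p - zs i $ p)\<^sup>2)"
    for k'
    unfolding power2_norm_vec vector_minus_component by (rule sum.swap)
  show ?thesis
    unfolding by_component component by (simp add: sum_divide_distrib)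
qed

lemma is_std_basis_zero_one: "is_std_basis v I \<Longrightarrow> q \<in> I \<Longrightarrow> v q \<in> {0, 1}"
  unfolding is_std_basis_def by auto

lemma block_idx_cover:
  assumes "ix i \<in> {1..r\<^sup>2}"
  shows "\<exists>a\<in>{1..r}. i \<in> block_idx ix r a"
proof -
  have r: "r > 0" using assms by (cases r) auto
  define d m where "d = (ix i - 1) div r" and "m = (ix i - 1) mod r"
  have "ix i - 1 < r * r" using assms by (auto simp: power2_eq_square)
  then have "d < r" using r by (simp add: d_def div_less_iff_less_mult)
  moreover have "ix i - 1 = r * d + m" by (simp add: d_def m_def)
  moreover have "m < r" using r by (simp add: m_def)
  ultimately show ?thesis
    using assms unfolding block_idx_def by (intro bexI[of _ "d + 1"]) (auto simp: algebra_simps)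
qed

lemma sudoku_C_zero_one:
  assumes ix: "\<And>a. ix a \<in> {1..r\<^sup>2}" and i: "i \<in> {1..4}" and y: "y \<in> sudoku_C ix r \<Omega> g i"
  shows "y $ q \<in> {0, 1}"
proof -
  obtain a b c where q: "q = (a, b, c)" by (cases q) auto
  from i consider "i = 1" | "i = 2" | "i = 3" | "i = 4" by fastforce
  then show ?thesis
  proof cases
    case 1
    with y have "is_std_basis (\<lambda>a. y $ (a, b, c)) UNIV" by (simp add: sudoku_C_def C1_def)
    then show ?thesis using is_std_basis_zero_one q by fastforce
  next
    case 2
    with y have "is_std_basis (\<lambda>b. y $ (a, b, c)) UNIV" by (simp add: sudoku_C_def C2_def)
    then show ?thesis using is_std_basis_zero_one q by fastforce
  next
    case 3
    with y have "is_std_basis (\<lambda>c. y $ (a, b, c)) UNIV" by (simp add: sudoku_C_def C3_def)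
    then show ?thesis using is_std_basis_zero_one q by fastforce
  next
    case 4
    obtain a' b' where "a' \<in> {1..r}" "a \<in> block_idx ix r a'" "b' \<in> {1..r}" "b \<in> block_idx ix r b'"
      using block_idx_cover[of ix, OF ix[of a]] block_idx_cover[of ix, OF ix[of b]] by meson
    moreover from 4 y have "\<forall>a'\<in>{1..r}. \<forall>b'\<in>{1..r}.
        is_std_basis (\<lambda>(a, b). y $ (a, b, c)) (block_idx ix r a' \<times> block_idx ix r b')"
      by (simp add: sudoku_C_def C4_def)
    ultimately show ?thesis using is_std_basis_zero_one[of _ _ "(a, b)"] q by fastforce
  qed
qed

lemma eventually_eq_lim_in_sudoku_C:
  assumes "\<And>a. ix a \<in> {1..r\<^sup>2}" and "i \<in> {1..4}"
    and "eventually (\<lambda>k. u k \<in> sudoku_C ix r \<Omega> g i) F" and "(u \<longlongrightarrow> L) F"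
  shows "eventually (\<lambda>k. u k = L) F"
proof (rule eventually_eq_lim_of_zero_one_vec[OF _ assms(4)])
  show "eventually (\<lambda>k. \<forall>q. u k $ q \<in> {0, 1}) F"
    using assms(3) by eventually_elim (use sudoku_C_zero_one[of ix r, OF assms(1,2)] in blast)
qed

lemma proj_C5_component:
  assumes "y \<in> proj (C5 \<Omega> g) w"
  shows "y $ p = (if p \<in> \<Omega> then g p else w $ p)"
proof -
  define y' where "y' = (\<chi> q. if q \<in> \<Omega> then g q else w $ q)"
  have y: "y \<in> C5 \<Omega> g" "dist w y = infdist w (C5 \<Omega> g)" using assms by (auto simp: proj_def)
  have "y' \<in> C5 \<Omega> g" by (simp add: y'_def C5_def)
  then have "dist w y \<le> dist w y'" using y(2) infdist_le by metis
  then have "(\<Sum>q\<in>UNIV. (w $ q - y $ q)\<^sup>2) \<le> (\<Sum>q\<in>UNIV. (w $ q - y' $ q)\<^sup>2)"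
    by (simp add: power_mono flip: power2_dist_vec)
  also have "\<dots> = (\<Sum>q\<in>UNIV. if q \<in> \<Omega> then (w $ q - y $ q)\<^sup>2 else 0)"
    using y(1) by (intro sum.cong) (auto simp: y'_def C5_def)
  finally have "(\<Sum>q\<in>UNIV. if q \<in> \<Omega> then 0 else (w $ q - y $ q)\<^sup>2) \<le> 0"
    using sum.Int_Diff[of UNIV "\<lambda>q. (w $ q - y $ q)\<^sup>2" \<Omega>] by (simp add: sum.If_cases Compl_eq_Diff_UNIV)
  then have "\<forall>q\<in>UNIV. (if q \<in> \<Omega> then 0 else (w $ q - y $ q)\<^sup>2) = 0"
    by (intro sum_nonneg_eq_0_iff[THEN iffD1] antisym) (simp_all add: sum_nonneg)
  then have "(if p \<in> \<Omega> then 0 else (w $ p - y $ p)\<^sup>2) = 0" by blast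
  then show ?thesis using y(1) by (auto simp: C5_def split: if_splits)
qed

lemma dr_step_C5_component:
  fixes z u x :: "nat \<Rightarrow> 'a::finite tensor"
  assumes u_step: "\<And>k. u (Suc k) \<in> proj (C5 \<Omega> g) (2 *\<^sub>R x (Suc k) - z k)"
    and z_step: "\<And>k. z (Suc k) = z k + u (Suc k) - x (Suc k)"
    and u_lim: "u \<longlonglongrightarrow> xs"
  shows "(\<forall>k. z (Suc k) $ p = z k $ p + xs $ p - x (Suc k) $ p) \<or> (\<forall>k. z (Suc k) $ p = x (Suc k) $ p)"
proof (cases "p \<in> \<Omega>")
  case True
  then have "\<And>k. u (Suc k) $ p = g p" using proj_C5_component[OF u_step] by simp
  moreover have "(\<lambda>k. u (Suc k) $ p) \<longlonglongrightarrow> xs $ p"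
    using LIMSEQ_Suc[OF u_lim] by (rule tendsto_vec_nth)
  ultimately have "g p = xs $ p" by (simp add: LIMSEQ_const_iff)
  with True show ?thesis by (simp add: z_step proj_C5_component[OF u_step])
next
  case False
  then show ?thesis by (simp add: z_step proj_C5_component[OF u_step])
qed

theorem proposition4p4:
  fixes ix :: "'a::finite \<Rightarrow> nat" and r s :: nat
    and \<Omega> :: "('a \<times> 'a \<times> 'a) set" and g :: "'a \<times> 'a \<times> 'a \<Rightarrow> real"
    and z u :: "nat \<Rightarrow> nat \<Rightarrow> 'a tensor" and x :: "nat \<Rightarrow> 'a tensor"
    and zs :: "nat \<Rightarrow> 'a tensor" and xs :: "'a tensor"
  defines "C \<equiv> sudoku_C ix r \<Omega> g"
  assumes s_sq: "s = r ^ 2" and s_ge: "s \<ge> 4"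
    and ix: "bij_betw ix UNIV {1..s}"
    and feasible: "(\<Inter>i\<in>{1..5}. C i) \<noteq> {}"
    and x_step: "\<forall>k. x (Suc k) = (1 / 5) *\<^sub>R (\<Sum>i = 1..5. z i k)"
    and u_step: "\<forall>k. \<forall>i\<in>{1..5}. u i (Suc k) \<in> proj (C i) (2 *\<^sub>R x (Suc k) - z i k)"
    and z_step: "\<forall>k. \<forall>i\<in>{1..5}. z i (Suc k) = z i k + u i (Suc k) - x (Suc k)"
    and z_lim: "\<forall>i\<in>{1..5}. (\<lambda>k. z i k) \<longlonglongrightarrow> zs i"
    and x_lim: "x \<longlonglongrightarrow> xs"
    and u_lim: "\<forall>i\<in>{1..5}. (\<lambda>k. u i k) \<longlonglongrightarrow> xs"
    and xs_def: "xs = (1 / 5) *\<^sub>R (\<Sum>i = 1..5. zs i)"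
    and preg: "\<forall>i\<in>{1..4}. prox_regular_at (C i) xs (xs - zs i)"
    and int_normal: "\<forall>i\<in>{1..4}. xs - zs i \<in> interior (limiting_normal (C i) xs)"
  shows "(\<exists>K. \<forall>k\<ge>K. \<forall>i\<in>{1..4}. u i k = xs) \<and>
         (\<lambda>k. sqrt (\<Sum>i = 1..5. (norm (z i k - zs i))\<^sup>2)) \<in> O(\<lambda>k. (sqrt 5 / 5) ^ k)"
proof -
  have ix_range: "ix a \<in> {1..r\<^sup>2}" for a using bij_betw_apply[OF ix] s_sq by simp
  have "eventually (\<lambda>k. u i (Suc k) = xs) sequentially" if "i \<in> {1..4}" for i
    using u_step u_lim that
    by (intro eventually_eq_lim_in_sudoku_C[of ix r, where \<Omega> = \<Omega> and g = g, OF ix_range that]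
        always_eventually LIMSEQ_Suc) (auto simp: C_def proj_def)
  then have "eventually (\<lambda>k. \<forall>i\<in>{1..4}. u i (Suc k) = xs) sequentially"
    by (intro eventually_ball_finite) auto
  then have "eventually (\<lambda>k. \<forall>i\<in>{1..4}. u i k = xs) sequentially"
    by (rule eventually_sequentially_Suc[THEN iffD1])
  then obtain K where K: "\<forall>k\<ge>K. \<forall>i\<in>{1..4}. u i k = xs" by (auto simp: eventually_sequentially)
  have u5_step: "u 5 (Suc k) \<in> proj (C5 \<Omega> g) (2 *\<^sub>R x (Suc k) - z 5 k)" for k
    using bspec[OF spec[OF u_step, of k], of 5] by (simp add: C_def sudoku_C_def)
  have z5_step: "z 5 (Suc k) = z 5 k + u 5 (Suc k) - x (Suc k)" for k using z_step by simp
  have u5_lim: "u 5 \<longlonglongrightarrow> xs" using u_lim by simp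
  define E where "E k = (\<Sum>i = 1..5. (norm (z i k - zs i))\<^sup>2)" for k
  have "E (Suc k) = E k / card {1..5::nat}" if "k > K" for k
    unfolding E_def
  proof (rule dr_errors_contract[where j = 5 and K = K])
    show "z i (Suc k) = z i k + xs - x (Suc k)" if "k \<ge> K" "i \<in> {1..5} - {5}" for k i
      using bspec[OF spec[OF z_step, of k], of i] K that by simp
    show "(\<forall>k\<ge>K. z 5 (Suc k) $ p = z 5 k $ p + xs $ p - x (Suc k) $ p) \<or>
          (\<forall>k\<ge>K. z 5 (Suc k) $ p = x (Suc k) $ p)" for p
      using dr_step_C5_component[OF u5_step z5_step u5_lim, of p] by blast
  qed (use that x_step xs_def z_lim x_lim in simp_all)
  then have "(\<lambda>k. sqrt (E k)) \<in> O(\<lambda>k. sqrt (1 / 5) ^ k)"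
    by (intro sqrt_bigo_power_of_eventually_contracting[where K = "Suc K"]) auto
  moreover have "sqrt (1 / 5) = sqrt 5 / 5"
    by (simp add: real_sqrt_divide field_simps)
  ultimately show ?thesis using K unfolding E_def by auto
qed

end
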